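(* Let $q=3^m$ with $m\ge 1$, let $\alpha$ be a primitive element of $\mathbb{F}_{q^2}$, and let $\mathcal{C}$ be the ternary cyclic code of length $q^2-1$ whose parity-check polynomial is $p_1(x)p_2(x)$, where $p_1(x)$ and $p_2(x)$ are the minimal polynomials over $\mathbb{F}_3$ of $\alpha^{-1}$ and $\alpha^{-(q+2)}$ respectively; equivalently $\mathcal{C}=\{(\mathrm{Tr}_{\mathbb{F}_{q^2}/\mathbb{F}_3}(a\alpha^{i(q+2)}+b\alpha^i))_{i=0}^{q^2-2}:\ a,b\in\mathbb{F}_{q^2}\}$. Then $\mathcal{C}$ has parameters $[q^2-1,4m,\frac{2q(q-2)}{3}]$, and its weight distribution is: weight $0$ occurs once; weight $\frac{2q(q-2)}{3}$ occurs $\frac{q^4-q^3-q^2+q}{6}$ times; weight $\frac{2q(q-1)}{3}$ occurs $q^3-q$ times; weight $\frac{2q^2}{3}$ occurs $\frac{q^4-q^3+q^2+q}{2}-1$ times; weight $\frac{2q(q+1)}{3}$ occurs $\frac{q^4-q^3-q^2+q}{3}$ times.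
   Context: $[n,k,d]$ denotes a linear code of length $n$, dimension $k$ and minimum Hamming distance $d$; weights are Hamming weights. $\mathrm{Tr}_{\mathbb{F}_{q^2}/\mathbb{F}_3}$ is the absolute trace. *)

theory Defs
  imports Main
begin

definition abs_trace3 :: "nat \<Rightarrow> 'a::field \<Rightarrow> 'a" where
  "abs_trace3 e x = (\<Sum>j<e. x ^ (3 ^ j))"

definition primitive_elem :: "'a::field \<Rightarrow> bool" where
  "primitive_elem \<alpha> \<longleftrightarrow> \<alpha> \<noteq> 0 \<and> (\<forall>x. x \<noteq> 0 \<longrightarrow> (\<exists>i::nat. x = \<alpha> ^ i))"

definition hweight :: "'a::zero list \<Rightarrow> nat" where
  "hweight c = length (filter (\<lambda>x. x \<noteq> 0) c)"

text \<open>The ternary code of length q^2-1 given by the trace description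
  (entries lie in the prime field F_3 of the ambient field of size q^2).\<close>
definition trace_code :: "nat \<Rightarrow> 'a::field \<Rightarrow> 'a list set" where
  "trace_code m \<alpha> = (let q = 3 ^ m in
     {map (\<lambda>i. abs_trace3 (2*m) (a * \<alpha> ^ (i * (q + 2)) + b * \<alpha> ^ i)) [0..<q^2 - 1]
      | a b. True})"

definition ternary_dim :: "'a list set \<Rightarrow> nat" where
  "ternary_dim C = (THE k. card C = 3 ^ k)"

text \<open>Minimum Hamming distance of a linear code = minimum nonzero weight.\<close>
definition min_dist :: "'a::zero list set \<Rightarrow> nat" where
  "min_dist C = Min {hweight c | c. c \<in> C \<and> hweight c \<noteq> 0}"

end

theory Submission
  imports Defs "HOL-Computational_Algebra.Polynomial"
begin

(* Let K = F_q inside F = F_(q^2) and \<theta> = \<alpha>^((q+1)/2), so that \<theta>^q = -\<theta>,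
   F = K + K\<theta> and \<delta> = \<theta>^2 lies in K.  The codeword of (a, b) has weight q^2 minus the
   number zeros a b of x in F with Tr(a x^(q+2) + b x) = 0.  As x \<mapsto> x^(q+2) is a bijection
   of F, for a \<noteq> 0 one may rescale to a = 1.  Writing x = u + v\<theta> and c = b + g\<theta> with
   u, v, b, g in K, the trace Tr(x^(q+2) + c x) collapses to Tr_K(u (\<delta> v^2 - 1 - b) - g \<delta> v),
   which is affine in u.  Summing over v, zeros 1 c takes one of four values, according to
   whether 1 + b is 0, is not of the form \<delta> v^2, or equals \<delta> v0^2 with v0 \<noteq> 0 (and then
   whether Tr_K(g \<delta> v0) = 0).  Counting the c in each class gives the weight distribution. *)

lemma card_Times_filter_eq_sum_fst:
  assumes "finite A" "finite B"
  shows "card {(a, b) \<in> A \<times> B. P a b} = (\<Sum>a\<in>A. card {b \<in> B. P a b})"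
proof -
  have "{(a, b) \<in> A \<times> B. P a b} = Sigma A (\<lambda>a. {b \<in> B. P a b})" by auto
  then show ?thesis using assms by (simp add: card_SigmaI)
qed

lemma card_Times_filter_eq_sum_snd:
  assumes "finite A" "finite B"
  shows "card {(a, b) \<in> A \<times> B. P a b} = (\<Sum>b\<in>B. card {a \<in> A. P a b})"
proof -
  have "card {(a, b) \<in> A \<times> B. P a b} = card {(b, a) \<in> B \<times> A. P a b}"
    by (rule bij_betw_same_card[of prod.swap]) (auto simp: bij_betw_def image_iff)
  also have "\<dots> = (\<Sum>b\<in>B. card {a \<in> A. P a b})"
    using card_Times_filter_eq_sum_fst[of B A "\<lambda>b a. P a b"] assms by simp
  finally show ?thesis .
qed

lemma sum_lessThan_add_split:
  fixes f :: "nat \<Rightarrow> 'a::comm_monoid_add"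
  shows "(\<Sum>j<a + b. f j) = (\<Sum>j<a. f j) + (\<Sum>j<b. f (a + j))"
  by (induction b) (simp_all add: add_ac)

lemma card_eq_2_mult_card_image:
  assumes "finite A" "\<And>x. x \<in> A \<Longrightarrow> card {y \<in> A. f y = f x} = 2"
  shows "card A = 2 * card (f ` A)"
proof -
  have "A = (\<Union>b\<in>f ` A. {y \<in> A. f y = b})" by auto
  also have "card \<dots> = (\<Sum>b\<in>f ` A. card {y \<in> A. f y = b})"
    by (rule card_UN_disjoint) (use assms(1) in auto)
  also have "\<dots> = (\<Sum>b\<in>f ` A. 2)"
    using assms(2) by (intro sum.cong) auto
  finally show ?thesis by simp
qed

lemma hweight_map_upt: "hweight (map f [0..<n]) = card {i. i < n \<and> f i \<noteq> 0}"
proof -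
  have "hweight (map f [0..<n]) = card {i. i < n \<and> f ([0..<n] ! i) \<noteq> 0}"
    by (simp add: hweight_def filter_map length_filter_conv_card o_def)
  also have "\<dots> = card {i. i < n \<and> f i \<noteq> 0}"
    by (rule arg_cong[where f = card]) auto
  finally show ?thesis .
qed

section \<open>Fields of characteristic three\<close>

lemma of_nat_card_eq_0: "of_nat (card (UNIV :: 'a::{ring_1,finite} set)) = (0::'a)"
proof -
  have "(\<Sum>y\<in>UNIV. y + 1) = (\<Sum>y\<in>(UNIV :: 'a set). y)"
    by (rule sum.reindex_bij_witness[of _ "\<lambda>y. y - 1" "\<lambda>y. y + 1"]) auto
  then show ?thesis by (simp add: sum.distrib)
qed

lemma char_3_if_card_power_3:
  assumes "card (UNIV :: 'a::{idom,finite} set) = 3 ^ k"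
  shows "(3::'a) = 0"
  using of_nat_card_eq_0[where 'a='a] assms by (simp add: power_eq_0_iff)

lemma frobenius3_add:
  fixes x y :: "'a::comm_ring_1"
  assumes "(3::'a) = 0"
  shows "(x + y) ^ 3 ^ j = x ^ 3 ^ j + y ^ 3 ^ j"
proof (induction j)
  case (Suc j)
  have cube: "(a + b) ^ 3 = a ^ 3 + b ^ 3" for a b :: 'a
  proof -
    have "(a + b) ^ 3 = a ^ 3 + b ^ 3 + 3 * (a\<^sup>2 * b + a * b\<^sup>2)"
      by (simp add: power2_eq_square power3_eq_cube algebra_simps)
    then show ?thesis using assms by simp
  qed
  have "(x + y) ^ 3 ^ Suc j = ((x + y) ^ 3 ^ j) ^ 3" by (simp add: power_mult[symmetric] mult.commute)
  also have "\<dots> = (x ^ 3 ^ j) ^ 3 + (y ^ 3 ^ j) ^ 3" by (simp add: Suc cube)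
  also have "\<dots> = x ^ 3 ^ Suc j + y ^ 3 ^ Suc j" by (simp add: power_mult[symmetric] mult.commute)
  finally show ?case .
qed simp

lemma power_pow3_uminus:
  fixes x :: "'a::comm_ring_1"
  shows "(- x) ^ 3 ^ j = - (x ^ 3 ^ j)"
  by (simp add: power_minus_odd)

lemma frobenius3_diff:
  fixes x y :: "'a::comm_ring_1"
  assumes "(3::'a) = 0"
  shows "(x - y) ^ 3 ^ j = x ^ 3 ^ j - y ^ 3 ^ j"
  using frobenius3_add[OF assms, of x "- y" j] by (simp add: power_pow3_uminus)

lemma frobenius3_sum:
  fixes f :: "'b \<Rightarrow> 'a::comm_ring_1"
  assumes "(3::'a) = 0"
  shows "(\<Sum>i\<in>A. f i) ^ 3 ^ j = (\<Sum>i\<in>A. f i ^ 3 ^ j)"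
  by (induction A rule: infinite_finite_induct) (simp_all add: frobenius3_add[OF assms] power_0_left)

lemma field_power_card_minus_1:
  fixes x :: "'a::{field,finite}"
  assumes "x \<noteq> 0"
  shows "x ^ (card (UNIV :: 'a set) - 1) = 1"
proof -
  let ?U = "UNIV - {0 :: 'a}"
  have "(\<Prod>y\<in>?U. x * y) = (\<Prod>y\<in>?U. y)"
    by (rule prod.reindex_bij_witness[of _ "\<lambda>y. y / x" "\<lambda>y. x * y"]) (use assms in auto)
  then have "x ^ card ?U * (\<Prod>y\<in>?U. y) = (\<Prod>y\<in>?U. y)"
    by (simp add: prod.distrib)
  moreover have "(\<Prod>y\<in>?U. y) \<noteq> 0" by (simp add: prod_zero_iff)
  ultimately show ?thesis by (simp add: card_Diff_singleton)
qed

lemma field_power_card: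
  fixes x :: "'a::{field,finite}"
  shows "x ^ card (UNIV :: 'a set) = x"
proof (cases "x = 0")
  case False
  have "card (UNIV :: 'a set) \<noteq> 0" by simp
  then have "x ^ card (UNIV :: 'a set) = x * x ^ (card (UNIV :: 'a set) - 1)"
    by (simp add: power_eq_if)
  then show ?thesis using field_power_card_minus_1[OF False] by simp
qed (simp add: finite_UNIV_card_ge_0)

section \<open>The absolute trace\<close>

lemma abs_trace3_0 [simp]: "abs_trace3 e 0 = 0"
  by (simp add: abs_trace3_def power_0_left)

lemma abs_trace3_add:
  fixes x y :: "'a::field"
  assumes "(3::'a) = 0"
  shows "abs_trace3 e (x + y) = abs_trace3 e x + abs_trace3 e y"
  by (simp add: abs_trace3_def frobenius3_add[OF assms] sum.distrib)

lemma abs_trace3_uminus: "abs_trace3 e (- x) = - abs_trace3 e x"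
  by (simp add: abs_trace3_def power_pow3_uminus sum_negf)

lemma abs_trace3_diff:
  fixes x y :: "'a::field"
  assumes "(3::'a) = 0"
  shows "abs_trace3 e (x - y) = abs_trace3 e x - abs_trace3 e y"
  using abs_trace3_add[OF assms, of e x "- y"] by (simp add: abs_trace3_uminus)

lemma abs_trace3_cube:
  fixes x :: "'a::field"
  assumes "(3::'a) = 0"
  shows "abs_trace3 e x ^ 3 = abs_trace3 e x - x + x ^ 3 ^ e"
proof -
  have "abs_trace3 e x ^ 3 = (\<Sum>j<e. x ^ 3 ^ Suc j)"
    using frobenius3_sum[OF assms, of "\<lambda>j. x ^ 3 ^ j" "{..<e}" 1]
    by (simp add: abs_trace3_def power_mult[symmetric] mult.commute)
  also have "\<dots> = (\<Sum>j<Suc e. x ^ 3 ^ j) - x"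
    by (subst sum.lessThan_Suc_shift) simp
  finally show ?thesis by (simp add: abs_trace3_def)
qed

lemma abs_trace3_in_prime_field:
  fixes x :: "'a::field"
  assumes "(3::'a) = 0" "x ^ 3 ^ e = x"
  shows "abs_trace3 e x \<in> {0, 1, -1}"
proof -
  let ?t = "abs_trace3 e x"
  have "?t ^ 3 = ?t" using abs_trace3_cube[OF assms(1)] assms(2) by simp
  then have "?t * (?t - 1) * (?t + 1) = 0" by (simp add: power3_eq_cube algebra_simps)
  then show ?thesis by (auto simp: eq_neg_iff_add_eq_0)
qed

lemma ex_abs_trace3_nonzero:
  assumes "card (UNIV :: 'a::{field,finite} set) = 3 ^ e" "e \<ge> 1"
  shows "\<exists>z::'a. abs_trace3 e z \<noteq> 0"
proof (rule ccontr)
  assume trace_zero: "\<not> ?thesis"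
  define P :: "'a poly" where "P = (\<Sum>j<e. monom 1 (3 ^ j))"
  have roots: "{x. poly P x = 0} = UNIV"
    using trace_zero by (auto simp: P_def poly_sum poly_monom abs_trace3_def)
  have top: "3 ^ j \<le> (3::nat) ^ (e - 1)" if "j < e" for j
    using that by (intro power_increasing) auto
  have "coeff P (3 ^ (e - 1)) = (\<Sum>j<e. if 3 ^ j = (3::nat) ^ (e - 1) then 1 else 0)"
    by (simp add: P_def coeff_sum)
  also have "\<dots> = (\<Sum>j\<in>{e - 1}. 1)"
    by (rule sum.mono_neutral_cong_right) (use assms in auto)
  finally have "P \<noteq> 0" by auto
  have "degree P \<le> 3 ^ (e - 1)"
    using top by (intro degree_le) (auto simp: P_def coeff_sum intro!: sum.neutral dest: le_less_trans)
  then have "card (UNIV :: 'a set) \<le> 3 ^ (e - 1)"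
    using card_poly_roots_bound[OF \<open>P \<noteq> 0\<close>] roots by simp
  moreover have "(3::nat) ^ (e - 1) < 3 ^ e" using assms by (intro power_strict_increasing) auto
  ultimately show False using assms by simp
qed

lemma card_fibre_additive_char_3:
  fixes L :: "'a::field \<Rightarrow> 'a"
  assumes char: "(3::'a) = 0" and fin: "finite S"
    and add: "\<And>x y. x \<in> S \<Longrightarrow> y \<in> S \<Longrightarrow> x + y \<in> S"
    and neg: "\<And>x. x \<in> S \<Longrightarrow> - x \<in> S"
    and L_add: "\<And>x y. L (x + y) = L x + L y"
    and L_vals: "\<And>x. x \<in> S \<Longrightarrow> L x \<in> {0, 1, -1}"
    and w: "w \<in> S" "L w \<noteq> 0"
    and t: "t \<in> {0, 1, -1}"
  shows "card {x \<in> S. L x = t} = card S div 3"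
proof -
  define f where "f s = card {x \<in> S. L x = s}" for s
  have "L 0 = 0" using L_add[of 0 0] by (metis add.right_neutral add_left_cancel)
  then have L_neg: "L (- x) = - L x" for x
    using L_add[of x "- x"] by (simp add: eq_neg_iff_add_eq_0 add.commute)
  obtain w1 where w1: "w1 \<in> S" "L w1 = 1"
    using w L_vals[OF w(1)] L_neg[of w] neg[OF w(1)] by auto
  have sub: "x - w1 \<in> S" "L (x - w1) = L x - 1" if "x \<in> S" for x
    using add[OF that neg[OF w1(1)]] L_add[of x "- w1"] by (simp_all add: L_neg w1)
  have shift: "f s = f (s + 1)" for s
  proof -
    have "bij_betw (\<lambda>x. x + w1) {x \<in> S. L x = s} {x \<in> S. L x = s + 1}"
      by (rule bij_betw_byWitness[of _ "\<lambda>x. x - w1"]) (auto simp: add w1 L_add sub)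
    then show ?thesis unfolding f_def by (rule bij_betw_same_card)
  qed
  have two: "(1::'a) + 1 = -1"
    using char by (simp add: eq_neg_iff_add_eq_0 add.assoc[symmetric])
  have equal: "f 1 = f 0" "f (-1) = f 0"
    using shift[of 0] shift[of 1] unfolding two by simp_all
  have "(1::'a) \<noteq> -1"
    using char two by (metis add.right_neutral add_left_cancel one_neq_zero)
  have "S = {x \<in> S. L x = 0} \<union> {x \<in> S. L x = 1} \<union> {x \<in> S. L x = -1}"
    using L_vals by auto
  also have "card \<dots> = card ({x \<in> S. L x = 0} \<union> {x \<in> S. L x = 1}) + f (-1)"
    unfolding f_def using fin \<open>1 \<noteq> -1\<close> by (intro card_Un_disjoint) auto
  also have "card ({x \<in> S. L x = 0} \<union> {x \<in> S. L x = 1}) = f 0 + f 1"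
    unfolding f_def using fin by (intro card_Un_disjoint) auto
  finally have "card S = 3 * f 0" using equal by simp
  moreover have "f t = f 0" using t equal by auto
  ultimately show ?thesis unfolding f_def by simp
qed

lemma weight_values_arith:
  fixes q r :: nat
  assumes q: "q = 3 * r" and "r \<ge> 1"
  shows "2 * q * (q - 2) div 3 = q\<^sup>2 - (3 * r\<^sup>2 + 4 * r)"
    and "2 * q * (q - 1) div 3 = q\<^sup>2 - (3 * r\<^sup>2 + 2 * r)"
    and "2 * q\<^sup>2 div 3 = q\<^sup>2 - 3 * r\<^sup>2"
    and "2 * q * (q + 1) div 3 = q\<^sup>2 - (3 * r\<^sup>2 - 2 * r)"
proof -
  obtain j where r: "r = j + 1" using \<open>r \<ge> 1\<close> by (metis add.commute le_Suc_ex)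
  have "2 * q * (q - 2) = 3 * (2 * r * (q - 2))" "2 * q * (q - 1) = 3 * (2 * r * (q - 1))"
    "2 * q\<^sup>2 = 3 * (2 * r * q)" "2 * q * (q + 1) = 3 * (2 * r * (q + 1))"
    unfolding q by (simp_all add: power2_eq_square)
  then show "2 * q * (q - 2) div 3 = q\<^sup>2 - (3 * r\<^sup>2 + 4 * r)"
    and "2 * q * (q - 1) div 3 = q\<^sup>2 - (3 * r\<^sup>2 + 2 * r)"
    and "2 * q\<^sup>2 div 3 = q\<^sup>2 - 3 * r\<^sup>2"
    and "2 * q * (q + 1) div 3 = q\<^sup>2 - (3 * r\<^sup>2 - 2 * r)"
    unfolding q r by (simp_all add: algebra_simps power2_eq_square)
qed

lemma weight_counts_arith:
  fixes q r s :: nat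
  assumes q: "q = 3 * r" and s: "q = 2 * s + 1"
  shows "(q^4 - q^3 - q^2 + q) div 6 = (q\<^sup>2 - 1) * (s * r)"
    and "q^3 - q = (q\<^sup>2 - 1) * q"
    and "(q^4 - q^3 + q^2 + q) div 2 - 1 = (q\<^sup>2 - 1) * (1 + s * q)"
    and "(q^4 - q^3 - q^2 + q) div 3 = (q\<^sup>2 - 1) * (s * (q - r))"
proof -
  have "q \<ge> 2" using q s by presburger
  then obtain k where k: "q = k + 2" by (metis add.commute le_Suc_ex)
  have P: "q^4 - q^3 - q^2 + q = q * (q - 1) * (q\<^sup>2 - 1)"
    and P': "q^4 - q^3 + q^2 + q = q * (q - 1) * (q\<^sup>2 - 1) + 2 * q\<^sup>2"
    unfolding k by (simp_all add: algebra_simps power_numeral_reduce numeral_eq_Suc)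
  have qq: "q * (q - 1) = 6 * (r * s)" using q s by simp
  show "(q^4 - q^3 - q^2 + q) div 6 = (q\<^sup>2 - 1) * (s * r)"
    unfolding P qq by (simp add: ac_simps)
  show "q^3 - q = (q\<^sup>2 - 1) * q"
    by (simp add: diff_mult_distrib power2_eq_square power3_eq_cube)
  define X where "X = q\<^sup>2 - 1"
  have X: "q\<^sup>2 = X + 1" using k by (simp add: X_def)
  have "q * (q - 1) * (q\<^sup>2 - 1) + 2 * q\<^sup>2 = 2 * ((q\<^sup>2 - 1) * (s * q) + q\<^sup>2)"
    unfolding X using s by (simp add: algebra_simps)
  then show "(q^4 - q^3 + q^2 + q) div 2 - 1 = (q\<^sup>2 - 1) * (1 + s * q)"
    unfolding P' by (simp add: X algebra_simps)
  have "q - r = 2 * r" using q by simp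
  then show "(q^4 - q^3 - q^2 + q) div 3 = (q\<^sup>2 - 1) * (s * (q - r))"
    unfolding P qq by (simp add: ac_simps)
qed

section \<open>The field of order \<open>q\<^sup>2\<close> and its subfield of order \<open>q\<close>\<close>

locale trace_code_field =
  fixes m :: nat and \<alpha> :: "'a::{field,finite}"
  assumes m_pos: "m \<ge> 1"
    and card_field: "card (UNIV :: 'a set) = (3 ^ m)\<^sup>2"
    and primitive: "primitive_elem \<alpha>"
begin

abbreviation q :: nat where "q \<equiv> 3 ^ m"
definition r :: nat where "r = 3 ^ (m - 1)"

lemma q_eq_3r: "q = 3 * r"
  using m_pos by (simp add: r_def flip: power_Suc)

lemma r_pos: "r \<ge> 1"
  by (simp add: r_def)

lemma q_ge_3: "q \<ge> 3"
  using q_eq_3r r_pos by linarith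

lemma q2_ge_9: "q\<^sup>2 \<ge> 9"
  using mult_le_mono[OF q_ge_3 q_ge_3] by (simp add: power2_eq_square)

lemma power_3_2m: "(3::nat) ^ (2 * m) = q\<^sup>2"
  by (simp add: power_mult[symmetric] mult.commute)

lemma char_3: "(3::'a) = 0"
  by (rule char_3_if_card_power_3[of "2 * m"]) (simp add: card_field power_3_2m)

lemma two_eq_minus_1: "(2::'a) = -1"
  using char_3 by (simp add: eq_neg_iff_add_eq_0)

lemma add_self_eq_uminus: "x + x = - (x::'a)"
proof -
  have "x + x = 2 * x" by (simp only: mult_2)
  then show ?thesis by (simp add: two_eq_minus_1)
qed

lemma power_q2: "x ^ q\<^sup>2 = (x::'a)"
  using field_power_card[of x] card_field by simp

lemma power_q_add: "(x + y) ^ q = x ^ q + (y::'a) ^ q"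
  by (rule frobenius3_add[OF char_3])

lemma power_q_diff: "(x - y) ^ q = x ^ q - (y::'a) ^ q"
  by (rule frobenius3_diff[OF char_3])

lemma power_q_uminus: "(- x) ^ q = - ((x::'a) ^ q)"
  by (rule power_pow3_uminus)

lemma power_q_power_q: "((x::'a) ^ q) ^ q = x"
  using power_q2[of x] by (simp add: power_mult[symmetric] power2_eq_square)

lemma alpha_nonzero: "\<alpha> \<noteq> 0"
  using primitive by (simp add: primitive_elem_def)

lemma bij_alpha_powers: "bij_betw (\<lambda>i. \<alpha> ^ i) {..<q\<^sup>2 - 1} (UNIV - {0})"
proof -
  let ?n = "q\<^sup>2 - 1"
  have order: "\<alpha> ^ ?n = 1"
    using field_power_card_minus_1[OF alpha_nonzero] card_field by simp
  have "?n > 0"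
    using q2_ge_9 by simp
  have "x \<in> (\<lambda>i. \<alpha> ^ i) ` {..<?n}" if "x \<noteq> 0" for x
  proof -
    obtain i where "x = \<alpha> ^ i" using primitive \<open>x \<noteq> 0\<close> by (auto simp: primitive_elem_def)
    also have "\<alpha> ^ i = (\<alpha> ^ ?n) ^ (i div ?n) * \<alpha> ^ (i mod ?n)"
      by (simp flip: power_mult power_add)
    also have "\<dots> = \<alpha> ^ (i mod ?n)"
      using order by simp
    finally show ?thesis using \<open>?n > 0\<close> by auto
  qed
  then have image: "(\<lambda>i. \<alpha> ^ i) ` {..<?n} = UNIV - {0}"
    using alpha_nonzero by auto
  moreover have "card (UNIV - {0::'a}) = ?n"
    using card_field by (simp add: card_Diff_singleton)
  ultimately have "inj_on (\<lambda>i. \<alpha> ^ i) {..<?n}"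
    by (intro eq_card_imp_inj_on) auto
  with image show ?thesis
    by (simp add: bij_betw_def)
qed

definition K :: "'a set" where "K = {x. x ^ q = x}"

lemma K_0: "0 \<in> K" and K_1: "1 \<in> K"
  by (simp_all add: K_def)

lemma K_add: "x \<in> K \<Longrightarrow> y \<in> K \<Longrightarrow> x + y \<in> K"
  and K_diff: "x \<in> K \<Longrightarrow> y \<in> K \<Longrightarrow> x - y \<in> K"
  and K_uminus: "x \<in> K \<Longrightarrow> - x \<in> K"
  and K_mult: "x \<in> K \<Longrightarrow> y \<in> K \<Longrightarrow> x * y \<in> K"
  and K_divide: "x \<in> K \<Longrightarrow> y \<in> K \<Longrightarrow> x / y \<in> K"
  by (simp_all add: K_def power_q_add power_q_diff power_q_uminus power_mult_distrib power_divide)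

lemma K_power: "x \<in> K \<Longrightarrow> x ^ k \<in> K"
  by (induction k) (simp_all add: K_1 K_mult)

lemma add_power_q_in_K: "z + z ^ q \<in> K"
  by (simp add: K_def power_q_add power_q_power_q add.commute)

definition \<theta> :: 'a where "\<theta> = \<alpha> ^ ((q + 1) div 2)"

lemma theta_nonzero: "\<theta> \<noteq> 0"
  using alpha_nonzero by (simp add: \<theta>_def)

lemma theta_power_q: "\<theta> ^ q = - \<theta>"
proof -
  txt \<open>\<open>\<theta> ^ (q - 1) = \<alpha> ^ ((q\<^sup>2 - 1) div 2)\<close> has order two, so it is \<open>-1\<close>.\<close>
  obtain t where t: "q = 2 * t + 1" using oddE[of q] by auto
  define k where "k = (t + 1) * (2 * t)"
  have n: "q\<^sup>2 - 1 = 2 * k" unfolding t k_def by (simp add: power2_eq_square algebra_simps)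
  have k: "0 < k" "k < q\<^sup>2 - 1" using q_ge_3 t n unfolding k_def by simp_all
  have "inj_on (\<lambda>i. \<alpha> ^ i) {..<q\<^sup>2 - 1}"
    using bij_alpha_powers by (simp add: bij_betw_def)
  then have "\<alpha> ^ k \<noteq> \<alpha> ^ 0"
    using inj_onD[of "\<lambda>i. \<alpha> ^ i" _ k 0] k by fastforce
  moreover have "(\<alpha> ^ k)\<^sup>2 = 1"
  proof -
    have "(\<alpha> ^ k)\<^sup>2 = \<alpha> ^ (q\<^sup>2 - 1)"
      unfolding n mult.commute[of 2 k] power_mult ..
    then show ?thesis using field_power_card_minus_1[OF alpha_nonzero] card_field by simp
  qed
  ultimately have "\<alpha> ^ k = -1"
    by (simp add: power2_eq_1_iff)
  moreover have "\<theta> ^ q = \<alpha> ^ k * \<theta>"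
  proof -
    have \<theta>: "\<theta> = \<alpha> ^ (t + 1)" by (simp add: \<theta>_def t)
    have e: "(t + 1) * q = k + (t + 1)" by (simp add: t k_def algebra_simps)
    have "(\<alpha> ^ (t + 1)) ^ q = \<alpha> ^ ((t + 1) * q)" by (rule power_mult[symmetric])
    also have "\<dots> = \<alpha> ^ k * \<alpha> ^ (t + 1)" unfolding e by (rule power_add)
    finally show ?thesis unfolding \<theta> .
  qed
  ultimately show ?thesis by simp
qed

definition \<delta> :: 'a where "\<delta> = \<theta>\<^sup>2"

lemma delta_in_K: "\<delta> \<in> K"
proof -
  have "(\<theta>\<^sup>2) ^ q = (\<theta> ^ q)\<^sup>2" unfolding power_mult[symmetric] by (simp only: mult.commute)
  then show ?thesis by (simp add: K_def \<delta>_def theta_power_q)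
qed

lemma delta_nonzero: "\<delta> \<noteq> 0"
  using theta_nonzero by (simp add: \<delta>_def)

lemma theta_notin_K: "\<theta> \<notin> K"
proof
  assume "\<theta> \<in> K"
  then have "\<theta> = - \<theta>" using theta_power_q by (simp add: K_def)
  then have "2 * \<theta> = 0" by (simp add: eq_neg_iff_add_eq_0)
  then show False using theta_nonzero by (simp add: two_eq_minus_1)
qed

lemma power_q_K_theta: "u \<in> K \<Longrightarrow> v \<in> K \<Longrightarrow> (u + v * \<theta>) ^ q = u - v * \<theta>"
  by (simp add: K_def power_q_add power_mult_distrib theta_power_q)

lemma bij_K_theta: "bij_betw (\<lambda>(u, v). u + v * \<theta>) (K \<times> K) UNIV"
proof (rule bij_betw_imageI)
  show "inj_on (\<lambda>(u, v). u + v * \<theta>) (K \<times> K)"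
  proof (rule inj_onI, clarify)
    fix u v u' v'
    assume K: "u \<in> K" "v \<in> K" "u' \<in> K" "v' \<in> K" and eq: "u + v * \<theta> = u' + v' * \<theta>"
    have "v = v'"
    proof (rule ccontr)
      assume "v \<noteq> v'"
      with eq have "\<theta> = (u - u') / (v' - v)" by (simp add: field_simps)
      also have "\<dots> \<in> K" using K by (intro K_divide K_diff)
      finally show False using theta_notin_K by simp
    qed
    with eq show "u = u' \<and> v = v'" by simp
  qed
  show "(\<lambda>(u, v). u + v * \<theta>) ` (K \<times> K) = UNIV"
  proof (intro set_eqI iffI)
    fix y :: 'a
    txt \<open>Solve \<open>y = u + v * \<theta>\<close>, \<open>y ^ q = u - v * \<theta>\<close>, using \<open>2 = -1\<close>.\<close>
    define u where "u = - (y + y ^ q)"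
    define v where "v = (y ^ q - y) / \<theta>"
    have u: "u \<in> K" unfolding u_def by (intro K_uminus add_power_q_in_K)
    have "v ^ q = (y ^ q - y) ^ q / \<theta> ^ q" by (simp add: v_def power_divide)
    also have "\<dots> = (y - y ^ q) / (- \<theta>)" by (simp add: power_q_diff power_q_power_q theta_power_q)
    also have "\<dots> = v" by (simp add: v_def minus_divide_left)
    finally have v: "v \<in> K" by (simp add: K_def)
    have "u + v * \<theta> = y"
    proof -
      have "v * \<theta> = y ^ q - y" using theta_nonzero by (simp add: v_def)
      then have "u + v * \<theta> = - (y + y)" by (simp add: u_def)
      then show ?thesis by (simp add: add_self_eq_uminus)
    qed
    then show "y \<in> (\<lambda>(u, v). u + v * \<theta>) ` (K \<times> K)"
      using u v by (intro image_eqI[of _ _ "(u, v)"]) auto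
  qed simp
qed

lemma card_K: "card K = q"
proof -
  have "card (K \<times> K) = card (UNIV :: 'a set)"
    using bij_K_theta by (rule bij_betw_same_card)
  then have "(card K)\<^sup>2 = q\<^sup>2"
    using card_field by (simp add: card_cartesian_product power2_eq_square)
  then show ?thesis by (simp add: power2_eq_iff_nonneg)
qed

lemma card_eq_card_K_theta: "card {y. P y} = card {(u, v) \<in> K \<times> K. P (u + v * \<theta>)}"
proof -
  let ?f = "\<lambda>(u, v). u + v * \<theta>"
  let ?A = "{(u, v) \<in> K \<times> K. P (u + v * \<theta>)}"
  have inj: "inj_on ?f (K \<times> K)" and surj: "?f ` (K \<times> K) = UNIV"
    using bij_K_theta by (simp_all add: bij_betw_def)
  have "?f ` ?A = {y. P y}"
  proof (intro equalityI subsetI)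
    fix y assume "y \<in> {y. P y}"
    have "y \<in> ?f ` (K \<times> K)" using surj by simp
    then obtain u v where "u \<in> K" "v \<in> K" "y = u + v * \<theta>" by auto
    with \<open>y \<in> {y. P y}\<close> show "y \<in> ?f ` ?A" by (auto intro: image_eqI[of _ _ "(u, v)"])
  next
    fix y assume "y \<in> ?f ` ?A"
    then show "y \<in> {y. P y}" by auto
  qed
  moreover have "inj_on ?f ?A"
    by (rule inj_on_subset[OF inj]) auto
  ultimately show ?thesis
    using card_image[of ?f ?A] by simp
qed

abbreviation Tr :: "'a \<Rightarrow> 'a" where "Tr \<equiv> abs_trace3 (2 * m)"
abbreviation TrK :: "'a \<Rightarrow> 'a" where "TrK \<equiv> abs_trace3 m"

lemma Tr_eq_TrK: "Tr z = TrK (z + z ^ q)"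
proof -
  have "Tr z = TrK z + (\<Sum>j<m. z ^ 3 ^ (m + j))"
    by (simp add: abs_trace3_def mult_2 sum_lessThan_add_split)
  also have "(\<Sum>j<m. z ^ 3 ^ (m + j)) = TrK (z ^ q)"
    by (simp add: abs_trace3_def power_add power_mult)
  finally show ?thesis
    by (simp add: abs_trace3_add[OF char_3])
qed

lemma TrK_in_prime_field: "x \<in> K \<Longrightarrow> TrK x \<in> {0, 1, -1}"
  by (intro abs_trace3_in_prime_field char_3) (simp add: K_def)

lemma Tr_in_prime_field: "Tr x \<in> {0, 1, -1}"
  using power_q2[of x] by (intro abs_trace3_in_prime_field char_3) (simp add: power_3_2m)

lemma TrK_cube: "x \<in> K \<Longrightarrow> TrK (x ^ 3) = TrK x"
proof -
  assume "x \<in> K"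
  have "TrK (x ^ 3) = (\<Sum>j<m. x ^ 3 ^ j) ^ 3"
    using frobenius3_sum[OF char_3, of "\<lambda>j. x ^ 3 ^ j" "{..<m}" 1]
    by (simp add: abs_trace3_def power_mult[symmetric] mult.commute)
  also have "\<dots> = TrK x"
    using abs_trace3_cube[OF char_3, of m x] \<open>x \<in> K\<close> by (simp add: abs_trace3_def K_def)
  finally show ?thesis .
qed

lemma ex_Tr_nonzero: "\<exists>z. Tr z \<noteq> 0"
  using ex_abs_trace3_nonzero[of "2 * m"] card_field m_pos by (simp add: power_3_2m)

lemma ex_TrK_nonzero: "\<exists>w\<in>K. TrK w \<noteq> 0"
  using ex_Tr_nonzero Tr_eq_TrK add_power_q_in_K by metis

lemma card_TrK_fibre:
  assumes "t \<in> {0, 1, -1}"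
  shows "card {x \<in> K. TrK x = t} = r"
proof -
  obtain w where "w \<in> K" "TrK w \<noteq> 0" using ex_TrK_nonzero by blast
  then have "card {x \<in> K. TrK x = t} = card K div 3"
    by (intro card_fibre_additive_char_3[OF char_3 _ K_add K_uminus abs_trace3_add[OF char_3]
          TrK_in_prime_field _ _ assms]) simp_all
  then show ?thesis using card_K q_eq_3r by simp
qed

lemma card_Tr_fibre:
  assumes "t \<in> {0, 1, -1}"
  shows "card {x. Tr x = t} = q * r"
proof -
  obtain w where "Tr w \<noteq> 0" using ex_Tr_nonzero by blast
  then have "card {x \<in> UNIV. Tr x = t} = card (UNIV :: 'a set) div 3"
    by (intro card_fibre_additive_char_3[OF char_3 _ _ _ abs_trace3_add[OF char_3]
          Tr_in_prime_field _ _ assms]) simp_all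
  then show ?thesis using card_field q_eq_3r by (simp add: power2_eq_square)
qed

lemma Tr_reduction_to_K:
  assumes K: "u \<in> K" "v \<in> K" "b \<in> K" "g \<in> K"
  shows "Tr ((u + v * \<theta>) ^ (q + 2) + (b + g * \<theta>) * (u + v * \<theta>))
       = TrK (u * (\<delta> * v\<^sup>2 - (1 + b)) - g * \<delta> * v)"
proof -
  define y where "y = u + v * \<theta>"
  define c where "c = b + g * \<theta>"
  define z where "z = y ^ (q + 2) + c * y"
  have yq: "y ^ q = u - v * \<theta>" and cq: "c ^ q = b - g * \<theta>"
    unfolding y_def c_def using K by (simp_all add: power_q_K_theta)
  have z: "z = y ^ q * y\<^sup>2 + c * y"
    by (simp add: z_def power_add power2_eq_square)
  have "z ^ q = (y ^ q) ^ q * (y ^ q)\<^sup>2 + c ^ q * y ^ q"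
    by (simp add: z power_q_add power_mult_distrib flip: power_mult) (simp add: mult.commute)
  then have zq: "z ^ q = y * (y ^ q)\<^sup>2 + c ^ q * y ^ q"
    by (simp add: power_q_power_q)
  txt \<open>The \<open>u ^ 3\<close> term below is harmless because \<open>TrK (u ^ 3) = TrK u\<close>.\<close>
  have "z + z ^ q = 2 * (u * (u\<^sup>2 - \<delta> * v\<^sup>2) + b * u + g * \<delta> * v)"
    unfolding zq unfolding z yq cq unfolding y_def c_def \<delta>_def
    by (simp add: algebra_simps power2_eq_square)
  also have "\<dots> = - (u ^ 3) + (u * (\<delta> * v\<^sup>2 - (1 + b)) - g * \<delta> * v) + u"
    by (simp add: two_eq_minus_1 algebra_simps power2_eq_square power3_eq_cube)
  finally have "TrK (z + z ^ q) = - TrK (u ^ 3) + TrK (u * (\<delta> * v\<^sup>2 - (1 + b)) - g * \<delta> * v) + TrK u"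
    by (simp add: abs_trace3_add[OF char_3] abs_trace3_diff[OF char_3] abs_trace3_uminus)
  then show ?thesis
    using Tr_eq_TrK[of z] TrK_cube[OF K(1)] by (simp add: z_def y_def c_def)
qed

section \<open>Zero counts\<close>

definition zeros :: "'a \<Rightarrow> 'a \<Rightarrow> nat" where
  "zeros a b = card {x. Tr (a * x ^ (q + 2) + b * x) = 0}"

lemma zeros_values_distinct:
  "distinct [q\<^sup>2, 3 * r\<^sup>2 - 2 * r, 3 * r\<^sup>2, 3 * r\<^sup>2 + 2 * r, 3 * r\<^sup>2 + 4 * r]"
proof -
  obtain j where "r = j + 1" using r_pos by (metis add.commute le_Suc_ex)
  then show ?thesis by (simp add: q_eq_3r power2_eq_square algebra_simps)
qed

lemma zeros_values_ordered: "3 * r\<^sup>2 - 2 * r \<le> 3 * r\<^sup>2" "3 * r\<^sup>2 \<le> 3 * r\<^sup>2 + 2 * r"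
  "3 * r\<^sup>2 + 2 * r \<le> 3 * r\<^sup>2 + 4 * r" "3 * r\<^sup>2 + 4 * r < q\<^sup>2"
proof -
  have "4 * r < 6 * r\<^sup>2" using r_pos by (simp add: power2_eq_square)
  then show "3 * r\<^sup>2 + 4 * r < q\<^sup>2" by (simp add: q_eq_3r power2_eq_square)
qed simp_all

lemma card_TrK_mult:
  assumes "c \<in> K" "t \<in> {0, 1, -1}"
  shows "card {u \<in> K. TrK (u * c) = t} = (if c = 0 then (if t = 0 then q else 0) else r)"
proof (cases "c = 0")
  case True
  then show ?thesis using assms(2) by (auto simp: card_K)
next
  case False
  have "bij_betw (\<lambda>u. u * c) {u \<in> K. TrK (u * c) = t} {w \<in> K. TrK w = t}"
    by (rule bij_betw_byWitness[of _ "\<lambda>w. w / c"]) (use False assms(1) in \<open>auto simp: K_mult K_divide\<close>)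
  then show ?thesis
    using card_TrK_fibre[OF assms(2)] False by (simp add: bij_betw_same_card)
qed

lemma zeros_1_eq_sum:
  assumes b: "b \<in> K" and g: "g \<in> K"
  defines "R \<equiv> {v \<in> K. \<delta> * v\<^sup>2 = 1 + b}"
  shows "zeros 1 (b + g * \<theta>) = (q - card R) * r + (\<Sum>v\<in>R. if TrK (g * \<delta> * v) = 0 then q else 0)"
proof -
  let ?e = "\<lambda>v. \<delta> * v\<^sup>2 - (1 + b)"
  have "zeros 1 (b + g * \<theta>)
      = card {(u, v) \<in> K \<times> K. Tr ((u + v * \<theta>) ^ (q + 2) + (b + g * \<theta>) * (u + v * \<theta>)) = 0}"
    unfolding zeros_def by (simp add: card_eq_card_K_theta)
  also have "\<dots> = card {(u, v) \<in> K \<times> K. TrK (u * ?e v) = TrK (g * \<delta> * v)}"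
  proof -
    have "(Tr ((u + v * \<theta>) ^ (q + 2) + (b + g * \<theta>) * (u + v * \<theta>)) = 0)
        = (TrK (u * ?e v) = TrK (g * \<delta> * v))" if "u \<in> K" "v \<in> K" for u v
      by (simp only: Tr_reduction_to_K[OF that b g] abs_trace3_diff[OF char_3] right_minus_eq)
    then show ?thesis by (intro arg_cong[where f = card]) blast
  qed
  also have "\<dots> = (\<Sum>v\<in>K. card {u \<in> K. TrK (u * ?e v) = TrK (g * \<delta> * v)})"
    by (rule card_Times_filter_eq_sum_snd) simp_all
  also have "\<dots> = (\<Sum>v\<in>K. if v \<in> R then (if TrK (g * \<delta> * v) = 0 then q else 0) else r)"
  proof (rule sum.cong[OF refl])
    fix v assume v: "v \<in> K"
    have "?e v \<in> K" using v b delta_in_K by (intro K_diff K_add K_mult K_power K_1)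
    moreover have "TrK (g * \<delta> * v) \<in> {0, 1, -1}"
      using v g delta_in_K by (intro TrK_in_prime_field K_mult)
    ultimately show "card {u \<in> K. TrK (u * ?e v) = TrK (g * \<delta> * v)}
        = (if v \<in> R then (if TrK (g * \<delta> * v) = 0 then q else 0) else r)"
      using v by (simp add: card_TrK_mult R_def)
  qed
  also have "\<dots> = (\<Sum>v\<in>K - R. r) + (\<Sum>v\<in>R. if TrK (g * \<delta> * v) = 0 then q else 0)"
    by (subst sum.subset_diff[of R]) (auto simp: R_def)
  also have "(\<Sum>v\<in>K - R. r) = (q - card R) * r"
    by (simp add: card_Diff_subset R_def card_K)
  finally show ?thesis .
qed

lemma zeros_1_minus_1:
  assumes "g \<in> K"
  shows "zeros 1 (- 1 + g * \<theta>) = 3 * r\<^sup>2 + 2 * r"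
proof -
  have "{v \<in> K. \<delta> * v\<^sup>2 = 1 + - 1} = {0}"
    using delta_nonzero K_0 by auto
  then have "zeros 1 (- 1 + g * \<theta>) = (q - 1) * r + q"
    using zeros_1_eq_sum[OF K_uminus[OF K_1] assms] by simp
  then show ?thesis
    using r_pos by (simp add: q_eq_3r power2_eq_square diff_mult_distrib)
qed

lemma zeros_1_not_delta_square:
  assumes "b \<in> K" "g \<in> K" "\<nexists>v. v \<in> K \<and> \<delta> * v\<^sup>2 = 1 + b"
  shows "zeros 1 (b + g * \<theta>) = 3 * r\<^sup>2"
proof -
  have no_roots: "{v \<in> K. \<delta> * v\<^sup>2 = 1 + b} = {}"
    using assms(3) by auto
  have "zeros 1 (b + g * \<theta>) = q * r"
    using zeros_1_eq_sum[OF assms(1,2), unfolded no_roots] by simp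
  then show ?thesis
    by (simp add: q_eq_3r power2_eq_square)
qed

lemma delta_square_roots:
  assumes "v0 \<in> K" "\<delta> * v0\<^sup>2 = e" "e \<noteq> 0"
  shows "{v \<in> K. \<delta> * v\<^sup>2 = e} = {v0, - v0}" and "v0 \<noteq> - v0"
proof -
  have "\<delta> * v\<^sup>2 = e \<longleftrightarrow> v = v0 \<or> v = - v0" for v
    using assms(2) delta_nonzero by (auto simp: power2_eq_iff)
  then show "{v \<in> K. \<delta> * v\<^sup>2 = e} = {v0, - v0}"
    using assms(1) K_uminus by auto
  have "v0 \<noteq> 0" using assms(2,3) by auto
  then show "v0 \<noteq> - v0"
    using add_self_eq_uminus[of v0] by (auto simp: eq_neg_iff_add_eq_0 two_eq_minus_1)
qed

lemma zeros_1_delta_square: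
  assumes "b \<in> K" "g \<in> K" "v0 \<in> K" "\<delta> * v0\<^sup>2 = 1 + b" "1 + b \<noteq> 0"
  shows "zeros 1 (b + g * \<theta>)
    = (if TrK (g * (\<delta> * v0)) = 0 then 3 * r\<^sup>2 + 4 * r else 3 * r\<^sup>2 - 2 * r)"
proof -
  note roots = delta_square_roots[OF assms(3-5)]
  have "TrK (g * \<delta> * (- v0)) = - TrK (g * \<delta> * v0)"
    by (simp add: abs_trace3_uminus[symmetric])
  then have "zeros 1 (b + g * \<theta>) = (q - 2) * r + (if TrK (g * \<delta> * v0) = 0 then 2 * q else 0)"
    using zeros_1_eq_sum[OF assms(1,2)] roots by (simp add: numeral_2_eq_2)
  moreover have "(q - 2) * r = 3 * r\<^sup>2 - 2 * r"
    unfolding diff_mult_distrib by (simp add: q_eq_3r power2_eq_square)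
  moreover have "2 * r \<le> 3 * r\<^sup>2"
  proof -
    have "2 \<le> 3 * r" using r_pos by linarith
    then show ?thesis by (simp add: power2_eq_square)
  qed
  ultimately show ?thesis
    by (simp add: q_eq_3r mult.assoc)
qed

definition delta_squares :: "'a set" where
  "delta_squares = (\<lambda>v. \<delta> * v\<^sup>2) ` (K - {0})"

lemma delta_squares_subset: "delta_squares \<subseteq> K - {0}"
  using delta_in_K delta_nonzero by (auto simp: delta_squares_def K_mult K_power)

lemma card_delta_squares: "2 * card delta_squares = q - 1"
proof -
  have "card {w \<in> K - {0}. \<delta> * w\<^sup>2 = \<delta> * v\<^sup>2} = 2" if "v \<in> K - {0}" for v
  proof -
    have "{w \<in> K - {0}. \<delta> * w\<^sup>2 = \<delta> * v\<^sup>2} = {w \<in> K. \<delta> * w\<^sup>2 = \<delta> * v\<^sup>2}"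
      using delta_nonzero that by auto
    then show ?thesis
      using delta_square_roots[of v "\<delta> * v\<^sup>2"] that delta_nonzero by simp
  qed
  then have "card (K - {0}) = 2 * card delta_squares"
    unfolding delta_squares_def by (intro card_eq_2_mult_card_image) simp_all
  then show ?thesis using K_0 card_K by simp
qed

lemma card_zeros_1_eq_sum:
  "card {c. zeros 1 c = z} = (\<Sum>e\<in>K. card {g \<in> K. zeros 1 (e - 1 + g * \<theta>) = z})"
proof -
  have "card {c. zeros 1 c = z} = card {(b, g) \<in> K \<times> K. zeros 1 (b + g * \<theta>) = z}"
    by (rule card_eq_card_K_theta)
  also have "\<dots> = (\<Sum>b\<in>K. card {g \<in> K. zeros 1 (b + g * \<theta>) = z})"
    by (rule card_Times_filter_eq_sum_fst) simp_all
  also have "\<dots> = (\<Sum>e\<in>K. card {g \<in> K. zeros 1 (e - 1 + g * \<theta>) = z})"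
    by (rule sum.reindex_bij_witness[of _ "\<lambda>e. e - 1" "\<lambda>b. b + 1"]) (auto simp: K_add K_diff K_1)
  finally show ?thesis .
qed

lemma card_zeros_1_fibre_at_0:
  "card {g \<in> K. zeros 1 (0 - 1 + g * \<theta>) = z} = (if z = 3 * r\<^sup>2 + 2 * r then q else 0)"
proof -
  have "{g \<in> K. zeros 1 (0 - 1 + g * \<theta>) = z} = (if z = 3 * r\<^sup>2 + 2 * r then K else {})"
    using zeros_1_minus_1 by auto
  then show ?thesis by (simp add: card_K)
qed

lemma card_zeros_1_fibre_not_delta_square:
  assumes "e \<in> K - insert 0 delta_squares"
  shows "card {g \<in> K. zeros 1 (e - 1 + g * \<theta>) = z} = (if z = 3 * r\<^sup>2 then q else 0)"
proof -
  have "\<nexists>v. v \<in> K \<and> \<delta> * v\<^sup>2 = 1 + (e - 1)"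
    using assms by (auto simp: delta_squares_def)
  then have "zeros 1 (e - 1 + g * \<theta>) = 3 * r\<^sup>2" if "g \<in> K" for g
    using assms that by (intro zeros_1_not_delta_square) (auto simp: K_diff K_1)
  then have "{g \<in> K. zeros 1 (e - 1 + g * \<theta>) = z} = (if z = 3 * r\<^sup>2 then K else {})"
    by auto
  then show ?thesis by (simp add: card_K)
qed

lemma card_zeros_1_fibre_delta_square:
  assumes "e \<in> delta_squares"
  shows "card {g \<in> K. zeros 1 (e - 1 + g * \<theta>) = z}
    = (if z = 3 * r\<^sup>2 + 4 * r then r else if z = 3 * r\<^sup>2 - 2 * r then q - r else 0)"
proof -
  obtain v0 where v0: "v0 \<in> K" "v0 \<noteq> 0" "\<delta> * v0\<^sup>2 = e"
    using assms unfolding delta_squares_def by blast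
  have e: "e \<in> K" "e \<noteq> 0" using assms delta_squares_subset by blast+
  let ?T = "{g \<in> K. TrK (g * (\<delta> * v0)) = 0}"
  have zeros: "zeros 1 (e - 1 + g * \<theta>)
      = (if g \<in> ?T then 3 * r\<^sup>2 + 4 * r else 3 * r\<^sup>2 - 2 * r)" if "g \<in> K" for g
  proof -
    have "zeros 1 (e - 1 + g * \<theta>)
        = (if TrK (g * (\<delta> * v0)) = 0 then 3 * r\<^sup>2 + 4 * r else 3 * r\<^sup>2 - 2 * r)"
      by (rule zeros_1_delta_square) (use v0 e that in \<open>simp_all add: K_diff K_1\<close>)
    then show ?thesis using that by simp
  qed
  have "\<delta> * v0 \<in> K" "\<delta> * v0 \<noteq> 0" using v0 delta_in_K delta_nonzero by (simp_all add: K_mult)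
  then have card_T: "card ?T = r"
    using card_TrK_mult[of "\<delta> * v0" 0] by simp
  consider "z = 3 * r\<^sup>2 + 4 * r" | "z = 3 * r\<^sup>2 - 2 * r" | "z \<noteq> 3 * r\<^sup>2 + 4 * r" "z \<noteq> 3 * r\<^sup>2 - 2 * r"
    by blast
  then show ?thesis
  proof cases
    case 1
    then have "{g \<in> K. zeros 1 (e - 1 + g * \<theta>) = z} = ?T"
      using zeros zeros_values_distinct by (auto split: if_splits)
    then show ?thesis using 1 card_T by simp
  next
    case 2
    then have "{g \<in> K. zeros 1 (e - 1 + g * \<theta>) = z} = K - ?T"
      using zeros zeros_values_distinct by (auto split: if_splits)
    then show ?thesis using 2 zeros_values_distinct card_T by (simp add: card_Diff_subset card_K)
  next
    case 3
    then have "{g \<in> K. zeros 1 (e - 1 + g * \<theta>) = z} = {}"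
      using zeros by auto
    then show ?thesis using 3 by simp
  qed
qed

lemma card_zeros_1:
  "card {c. zeros 1 c = z}
    = (if z = 3 * r\<^sup>2 + 2 * r then q else 0)
      + card delta_squares * ((if z = 3 * r\<^sup>2 then q else 0)
          + (if z = 3 * r\<^sup>2 + 4 * r then r else if z = 3 * r\<^sup>2 - 2 * r then q - r else 0))"
proof -
  let ?h = "\<lambda>e. card {g \<in> K. zeros 1 (e - 1 + g * \<theta>) = z}"
  let ?S = "delta_squares" and ?N = "K - insert 0 delta_squares"
  have K: "K = insert 0 (?S \<union> ?N)" and "0 \<notin> ?S \<union> ?N"
    using K_0 delta_squares_subset by auto
  have "card {c. zeros 1 c = z} = sum ?h K"
    by (rule card_zeros_1_eq_sum)
  also have "\<dots> = sum ?h (insert 0 (?S \<union> ?N))"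
    by (rule arg_cong[OF K])
  also have "\<dots> = ?h 0 + sum ?h (?S \<union> ?N)"
    using \<open>0 \<notin> ?S \<union> ?N\<close> by (rule sum.insert[rotated]) simp
  also have "\<dots> = ?h 0 + sum ?h ?S + sum ?h ?N"
    by (subst sum.union_disjoint) auto
  also have "\<dots> = (if z = 3 * r\<^sup>2 + 2 * r then q else 0)
      + card ?S * (if z = 3 * r\<^sup>2 + 4 * r then r else if z = 3 * r\<^sup>2 - 2 * r then q - r else 0)
      + card ?N * (if z = 3 * r\<^sup>2 then q else 0)"
    using card_zeros_1_fibre_at_0
    by (simp add: card_zeros_1_fibre_delta_square card_zeros_1_fibre_not_delta_square)
  also have "card ?N = card ?S"
  proof -
    have "card ?N = q - Suc (card ?S)"
      using delta_squares_subset K_0 card_K by (subst card_Diff_subset) (auto simp: card_insert_if)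
    then show ?thesis using card_delta_squares by simp
  qed
  finally show ?thesis
    by (simp add: algebra_simps)
qed

lemma cube_root_of_unity_eq_1: "(u::'a) ^ 3 = 1 \<Longrightarrow> u = 1"
  using frobenius3_diff[OF char_3, of u 1 1] by simp

lemma bij_power_q_plus_2: "bij (\<lambda>x::'a. x ^ (q + 2))"
proof -
  txt \<open>As \<open>q\<^sup>2 - 1 = (q + 2) * (q - 2) + 3\<close>, \<open>u ^ (q + 2) = 1\<close> forces \<open>u ^ 3 = 1\<close>,
    and in characteristic 3 the only cube root of unity is \<open>1\<close>.\<close>
  have "x = y" if eq: "x ^ (q + 2) = y ^ (q + 2)" for x y :: 'a
  proof (cases "y = 0")
    case False
    define u where "u = x / y"
    have u: "u ^ (q + 2) = 1" using eq False by (simp add: u_def power_divide)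
    have "u \<noteq> 0"
    proof
      assume "u = 0"
      then show False using u by simp
    qed
    obtain t where "q = t + 3" using q_ge_3 by (metis add.commute le_Suc_ex)
    then have "q\<^sup>2 - 1 = (q + 2) * (q - 2) + 3"
      by (simp add: power2_eq_square algebra_simps)
    then have "u ^ (q\<^sup>2 - 1) = (u ^ (q + 2)) ^ (q - 2) * u ^ 3"
      by (simp only: power_add power_mult)
    then have "u ^ 3 = 1"
      using u field_power_card_minus_1[OF \<open>u \<noteq> 0\<close>] card_field by simp
    then have "u = 1" by (rule cube_root_of_unity_eq_1)
    then show ?thesis
      using False by (simp add: u_def)
  qed (use eq in simp)
  then have "inj (\<lambda>x::'a. x ^ (q + 2))" by (rule injI)
  then show ?thesis using finite_UNIV_inj_surj[of "\<lambda>x::'a. x ^ (q + 2)"] by (simp add: bij_def)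
qed

lemma zeros_rescale:
  assumes "a * s ^ (q + 2) = 1"
  shows "zeros a b = zeros 1 (b * s)"
proof -
  have "s \<noteq> 0" using assms by auto
  have scale: "a * (s * y) ^ (q + 2) + b * (s * y) = 1 * y ^ (q + 2) + b * s * y" for y
  proof -
    have "a * (s * y) ^ (q + 2) = (a * s ^ (q + 2)) * y ^ (q + 2)"
      by (simp only: power_mult_distrib mult.assoc)
    then have "a * (s * y) ^ (q + 2) = y ^ (q + 2)"
      by (simp only: assms mult_1_left)
    then show ?thesis by (simp only: mult_1_left mult.assoc)
  qed
  have "bij_betw (\<lambda>y. s * y) {y. Tr (1 * y ^ (q + 2) + b * s * y) = 0}
      {x. Tr (a * x ^ (q + 2) + b * x) = 0}"
  proof (rule bij_betw_byWitness[of _ "\<lambda>x. x / s"])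
    show "(\<lambda>y. s * y) ` {y. Tr (1 * y ^ (q + 2) + b * s * y) = 0} \<subseteq> {x. Tr (a * x ^ (q + 2) + b * x) = 0}"
      by (auto simp only: scale image_iff mem_Collect_eq)
    have "Tr (1 * (x / s) ^ (q + 2) + b * s * (x / s)) = 0" if "Tr (a * x ^ (q + 2) + b * x) = 0" for x
      using scale[of "x / s"] that \<open>s \<noteq> 0\<close> by simp
    then show "(\<lambda>x. x / s) ` {x. Tr (a * x ^ (q + 2) + b * x) = 0} \<subseteq> {y. Tr (1 * y ^ (q + 2) + b * s * y) = 0}"
      by auto
  qed (use \<open>s \<noteq> 0\<close> in auto)
  then show ?thesis
    unfolding zeros_def by (simp add: bij_betw_same_card mult.assoc)
qed

lemma zeros_0_nonzero:
  assumes "b \<noteq> 0"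
  shows "zeros 0 b = 3 * r\<^sup>2"
proof -
  have "bij_betw (\<lambda>x. b * x) {x. Tr (b * x) = 0} {y. Tr y = 0}"
    by (rule bij_betw_byWitness[of _ "\<lambda>y. y / b"]) (use assms in auto)
  then have "zeros 0 b = card {y. Tr y = 0}"
    unfolding zeros_def by (simp add: bij_betw_same_card)
  then show ?thesis
    using card_Tr_fibre[of 0] by (simp add: q_eq_3r power2_eq_square)
qed

lemma zeros_0_0: "zeros 0 0 = q\<^sup>2"
  using card_field by (simp add: zeros_def)

lemma card_zeros_0:
  "card {b. zeros 0 b = z} = (if z = q\<^sup>2 then 1 else 0) + (if z = 3 * r\<^sup>2 then q\<^sup>2 - 1 else 0)"
proof -
  have "zeros 0 b = (if b = 0 then q\<^sup>2 else 3 * r\<^sup>2)" for b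
    using zeros_0_0 zeros_0_nonzero by simp
  then have "{b. zeros 0 b = z}
      = (if z = q\<^sup>2 then {0} else {}) \<union> (if z = 3 * r\<^sup>2 then UNIV - {0} else {})"
    using zeros_values_distinct by auto
  moreover have "card (UNIV - {0::'a}) = q\<^sup>2 - 1"
    using card_field by (simp add: card_Diff_singleton)
  ultimately show ?thesis
    using zeros_values_distinct by (simp add: card_Un_disjoint)
qed

lemma card_zeros_nonzero:
  assumes "a \<noteq> 0"
  shows "card {b. zeros a b = z} = card {c. zeros 1 c = z}"
proof -
  obtain s where s: "s ^ (q + 2) = inverse a"
    using bij_power_q_plus_2 by (metis bij_pointE)
  then have "a * s ^ (q + 2) = 1" "s \<noteq> 0" using assms by auto
  then have "bij_betw (\<lambda>b. b * s) {b. zeros a b = z} {c. zeros 1 c = z}"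
    by (intro bij_betw_byWitness[of _ "\<lambda>c. c / s"]) (auto simp: zeros_rescale)
  then show ?thesis by (rule bij_betw_same_card)
qed

lemma card_zeros:
  "card {(a, b). zeros a b = z}
    = (if z = q\<^sup>2 then 1 else 0) + (q\<^sup>2 - 1) * ((if z = 3 * r\<^sup>2 then 1 else 0) + card {c. zeros 1 c = z})"
proof -
  have "{(a, b). zeros a b = z} = Pair (0::'a) ` {b. zeros 0 b = z} \<union> Sigma (UNIV - {0}) (\<lambda>a. {b. zeros a b = z})"
    by auto
  also have "card \<dots> = card (Pair (0::'a) ` {b. zeros 0 b = z}) + card (Sigma (UNIV - {0::'a}) (\<lambda>a. {b. zeros a b = z}))"
    by (intro card_Un_disjoint) auto
  also have "card (Pair (0::'a) ` {b. zeros 0 b = z}) = card {b. zeros 0 b = z}"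
    by (rule card_image) (simp add: inj_on_def)
  also have "card (Sigma (UNIV - {0::'a}) (\<lambda>a. {b. zeros a b = z}))
      = (\<Sum>a\<in>UNIV - {0::'a}. card {b. zeros a b = z})"
    by (rule card_SigmaI) simp_all
  also have "(\<Sum>a\<in>UNIV - {0::'a}. card {b. zeros a b = z}) = (\<Sum>a\<in>UNIV - {0::'a}. card {c. zeros 1 c = z})"
    by (intro sum.cong refl card_zeros_nonzero) simp
  also have "\<dots> = (q\<^sup>2 - 1) * card {c. zeros 1 c = z}"
    using card_field by (simp add: card_Diff_singleton)
  finally show ?thesis
    by (simp add: card_zeros_0 distrib_left)
qed

lemma card_zeros_1_q2: "card {c. zeros 1 c = q\<^sup>2} = 0"
  using zeros_values_distinct by (simp add: card_zeros_1)

lemma zeros_eq_q2_iff: "zeros a b = q\<^sup>2 \<longleftrightarrow> a = 0 \<and> b = 0"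
proof
  assume "zeros a b = q\<^sup>2"
  moreover have "card {(a, b). zeros a b = q\<^sup>2} = 1"
    using card_zeros_1_q2 zeros_values_distinct by (simp add: card_zeros)
  moreover have "(0, 0) \<in> {(a, b). zeros a b = q\<^sup>2}"
    by (simp add: zeros_0_0)
  ultimately show "a = 0 \<and> b = 0"
    by (metis (mono_tags, lifting) card_1_singletonE case_prodI mem_Collect_eq prod.inject singletonD)
qed (simp add: zeros_0_0)

lemma zeros_values:
  assumes "(a, b) \<noteq> (0, 0)"
  shows "zeros a b \<in> {3 * r\<^sup>2 - 2 * r, 3 * r\<^sup>2, 3 * r\<^sup>2 + 2 * r, 3 * r\<^sup>2 + 4 * r}"
proof (rule ccontr)
  let ?z = "zeros a b"
  assume "?z \<notin> {3 * r\<^sup>2 - 2 * r, 3 * r\<^sup>2, 3 * r\<^sup>2 + 2 * r, 3 * r\<^sup>2 + 4 * r}"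
  moreover have "?z \<noteq> q\<^sup>2" using assms zeros_eq_q2_iff by auto
  ultimately have "card {(a', b'). zeros a' b' = ?z} = 0"
    by (simp add: card_zeros card_zeros_1)
  moreover have "(a, b) \<in> {(a', b'). zeros a' b' = ?z}" by simp
  ultimately show False by (simp add: card_eq_0_iff)
qed

section \<open>The code\<close>

definition codeword :: "'a \<Rightarrow> 'a \<Rightarrow> 'a list" where
  "codeword a b = map (\<lambda>i. Tr (a * \<alpha> ^ (i * (q + 2)) + b * \<alpha> ^ i)) [0..<q\<^sup>2 - 1]"

lemma trace_code_eq: "trace_code m \<alpha> = range (case_prod codeword)"
  unfolding trace_code_def codeword_def Let_def by auto

lemma length_codeword: "length (codeword a b) = q\<^sup>2 - 1"
  by (simp add: codeword_def)

lemma hweight_codeword: "hweight (codeword a b) = q\<^sup>2 - zeros a b"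
proof -
  let ?f = "\<lambda>x. Tr (a * x ^ (q + 2) + b * x)"
  have powers: "inj_on (\<lambda>i. \<alpha> ^ i) {..<q\<^sup>2 - 1}" "(\<lambda>i. \<alpha> ^ i) ` {..<q\<^sup>2 - 1} = UNIV - {0}"
    using bij_alpha_powers by (simp_all add: bij_betw_def)
  have "hweight (codeword a b) = card {i \<in> {..<q\<^sup>2 - 1}. ?f (\<alpha> ^ i) \<noteq> 0}"
    unfolding codeword_def hweight_map_upt power_mult by simp
  also have "\<dots> = card ((\<lambda>i. \<alpha> ^ i) ` {i \<in> {..<q\<^sup>2 - 1}. ?f (\<alpha> ^ i) \<noteq> 0})"
    by (rule card_image[symmetric], rule inj_on_subset[OF powers(1)]) blast
  also have "(\<lambda>i. \<alpha> ^ i) ` {i \<in> {..<q\<^sup>2 - 1}. ?f (\<alpha> ^ i) \<noteq> 0}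
      = {x \<in> (\<lambda>i. \<alpha> ^ i) ` {..<q\<^sup>2 - 1}. ?f x \<noteq> 0}"
    by blast
  also have "\<dots> = UNIV - {x. ?f x = 0}"
    unfolding powers(2) by auto
  finally show ?thesis
    using card_field by (simp add: zeros_def card_Diff_subset)
qed

lemma codeword_eq_iff: "codeword a b = codeword a' b' \<longleftrightarrow> a = a' \<and> b = b'"
proof
  assume eq: "codeword a b = codeword a' b'"
  let ?X = "\<lambda>i. \<alpha> ^ (i * (q + 2))" and ?Y = "\<lambda>i. \<alpha> ^ i"
  have "Tr ((a - a') * ?X i + (b - b') * ?Y i) = 0" if "i < q\<^sup>2 - 1" for i
  proof -
    have "Tr (a * ?X i + b * ?Y i) = Tr (a' * ?X i + b' * ?Y i)"
      using arg_cong[where f = "\<lambda>c. c ! i", OF eq] that by (simp add: codeword_def)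
    moreover have "(a - a') * ?X i + (b - b') * ?Y i = (a * ?X i + b * ?Y i) - (a' * ?X i + b' * ?Y i)"
      by (simp add: algebra_simps)
    ultimately show ?thesis by (simp add: abs_trace3_diff[OF char_3])
  qed
  then have "hweight (codeword (a - a') (b - b')) = 0"
    unfolding codeword_def hweight_map_upt by simp
  then have "zeros (a - a') (b - b') = q\<^sup>2"
    using card_mono[of UNIV "{x. Tr ((a - a') * x ^ (q + 2) + (b - b') * x) = 0}"] card_field
    by (simp add: hweight_codeword zeros_def)
  then show "a = a' \<and> b = b'" by (simp add: zeros_eq_q2_iff)
qed simp

lemma zeros_le_q2: "zeros a b \<le> q\<^sup>2"
proof -
  have "zeros a b \<le> card (UNIV :: 'a set)"
    unfolding zeros_def by (rule card_mono) simp_all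
  then show ?thesis using card_field by simp
qed

lemma inj_codeword: "inj (case_prod codeword)"
proof (rule injI)
  fix p p' :: "'a \<times> 'a"
  assume "case_prod codeword p = case_prod codeword p'"
  then show "p = p'" by (cases p, cases p') (simp add: codeword_eq_iff)
qed

lemma card_trace_code_weight:
  assumes "z \<le> q\<^sup>2"
  shows "card {c \<in> trace_code m \<alpha>. hweight c = q\<^sup>2 - z} = card {(a, b). zeros a b = z}"
proof -
  have "hweight (codeword a b) = q\<^sup>2 - z \<longleftrightarrow> zeros a b = z" for a b
    using assms zeros_le_q2[of a b] by (auto simp: hweight_codeword)
  then have "{c \<in> trace_code m \<alpha>. hweight c = q\<^sup>2 - z} = case_prod codeword ` {(a, b). zeros a b = z}"
    unfolding trace_code_eq by fastforce
  then show ?thesis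
    using inj_codeword by (simp add: card_image inj_on_subset)
qed

lemma card_trace_code: "card (trace_code m \<alpha>) = 3 ^ (4 * m)"
proof -
  have "card (trace_code m \<alpha>) = card (UNIV :: ('a \<times> 'a) set)"
    unfolding trace_code_eq using inj_codeword by (simp add: card_image)
  also have "\<dots> = q\<^sup>2 * q\<^sup>2"
    using card_field by (simp flip: UNIV_Times_UNIV add: card_cartesian_product)
  finally show ?thesis by (simp flip: power_add power_mult)
qed

lemma ternary_dim_trace_code: "ternary_dim (trace_code m \<alpha>) = 4 * m"
  unfolding ternary_dim_def card_trace_code by (rule the_equality) (simp_all add: power_inject_exp)

lemma card_trace_code_weights:
  defines "s \<equiv> card delta_squares"
  shows "card {c \<in> trace_code m \<alpha>. hweight c = 0} = 1"
    and "card {c \<in> trace_code m \<alpha>. hweight c = q\<^sup>2 - (3 * r\<^sup>2 + 4 * r)} = (q\<^sup>2 - 1) * (s * r)"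
    and "card {c \<in> trace_code m \<alpha>. hweight c = q\<^sup>2 - (3 * r\<^sup>2 + 2 * r)} = (q\<^sup>2 - 1) * q"
    and "card {c \<in> trace_code m \<alpha>. hweight c = q\<^sup>2 - 3 * r\<^sup>2} = (q\<^sup>2 - 1) * (1 + s * q)"
    and "card {c \<in> trace_code m \<alpha>. hweight c = q\<^sup>2 - (3 * r\<^sup>2 - 2 * r)} = (q\<^sup>2 - 1) * (s * (q - r))"
proof -
  note le = zeros_values_ordered and neq = zeros_values_distinct
  show "card {c \<in> trace_code m \<alpha>. hweight c = 0} = 1"
    using card_trace_code_weight[of "q\<^sup>2"] card_zeros[of "q\<^sup>2"] card_zeros_1_q2 neq by simp
  show "card {c \<in> trace_code m \<alpha>. hweight c = q\<^sup>2 - (3 * r\<^sup>2 + 4 * r)} = (q\<^sup>2 - 1) * (s * r)"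
    using card_trace_code_weight[of "3 * r\<^sup>2 + 4 * r"] card_zeros[of "3 * r\<^sup>2 + 4 * r"]
      card_zeros_1[of "3 * r\<^sup>2 + 4 * r"] le neq by (simp add: s_def)
  show "card {c \<in> trace_code m \<alpha>. hweight c = q\<^sup>2 - (3 * r\<^sup>2 + 2 * r)} = (q\<^sup>2 - 1) * q"
    using card_trace_code_weight[of "3 * r\<^sup>2 + 2 * r"] card_zeros[of "3 * r\<^sup>2 + 2 * r"]
      card_zeros_1[of "3 * r\<^sup>2 + 2 * r"] le neq by (simp add: s_def)
  show "card {c \<in> trace_code m \<alpha>. hweight c = q\<^sup>2 - 3 * r\<^sup>2} = (q\<^sup>2 - 1) * (1 + s * q)"
    using card_trace_code_weight[of "3 * r\<^sup>2"] card_zeros[of "3 * r\<^sup>2"]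
      card_zeros_1[of "3 * r\<^sup>2"] le neq by (simp add: s_def)
  show "card {c \<in> trace_code m \<alpha>. hweight c = q\<^sup>2 - (3 * r\<^sup>2 - 2 * r)} = (q\<^sup>2 - 1) * (s * (q - r))"
    using card_trace_code_weight[of "3 * r\<^sup>2 - 2 * r"] card_zeros[of "3 * r\<^sup>2 - 2 * r"]
      card_zeros_1[of "3 * r\<^sup>2 - 2 * r"] le neq by (simp add: s_def)
qed

lemma min_dist_trace_code: "min_dist (trace_code m \<alpha>) = q\<^sup>2 - (3 * r\<^sup>2 + 4 * r)"
proof -
  let ?W = "{hweight c |c. c \<in> trace_code m \<alpha> \<and> hweight c \<noteq> 0}"
  have lower: "q\<^sup>2 - (3 * r\<^sup>2 + 4 * r) \<le> w" if weight: "w \<in> ?W" for w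
  proof -
    obtain c where c: "c \<in> trace_code m \<alpha>" "w = hweight c" "w \<noteq> 0"
      using weight by blast
    then obtain a b where "c = codeword a b"
      unfolding trace_code_eq by auto
    with c have w: "w = q\<^sup>2 - zeros a b" "w \<noteq> 0" by (simp_all add: hweight_codeword)
    then have "(a, b) \<noteq> (0, 0)" by (auto simp: zeros_0_0)
    then show ?thesis
      using zeros_values[of a b] zeros_values_ordered w(1) by auto
  qed
  have "card delta_squares \<noteq> 0"
    using card_delta_squares q_ge_3 by linarith
  then have "card {c \<in> trace_code m \<alpha>. hweight c = q\<^sup>2 - (3 * r\<^sup>2 + 4 * r)} \<noteq> 0"
    using card_trace_code_weights(2) q2_ge_9 r_pos by simp
  then obtain c where c: "c \<in> trace_code m \<alpha>" "hweight c = q\<^sup>2 - (3 * r\<^sup>2 + 4 * r)"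
    by (metis (mono_tags, lifting) card.empty empty_Collect_eq)
  moreover have "hweight c \<noteq> 0"
    using c(2) zeros_values_ordered(4) by simp
  ultimately have attained: "q\<^sup>2 - (3 * r\<^sup>2 + 4 * r) \<in> ?W"
    by force
  have "?W \<subseteq> hweight ` trace_code m \<alpha>"
    by auto
  then have "finite ?W"
    unfolding trace_code_eq by (rule finite_subset) simp
  then show ?thesis
    unfolding min_dist_def using lower attained by (intro Min_eqI) auto
qed

lemma trace_code_parameters:
  "(\<forall>c\<in>trace_code m \<alpha>. length c = q\<^sup>2 - 1)
    \<and> ternary_dim (trace_code m \<alpha>) = 4 * m
    \<and> min_dist (trace_code m \<alpha>) = 2 * q * (q - 2) div 3
    \<and> card {c \<in> trace_code m \<alpha>. hweight c = 0} = 1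
    \<and> card {c \<in> trace_code m \<alpha>. hweight c = 2 * q * (q - 2) div 3} = (q^4 - q^3 - q^2 + q) div 6
    \<and> card {c \<in> trace_code m \<alpha>. hweight c = 2 * q * (q - 1) div 3} = q^3 - q
    \<and> card {c \<in> trace_code m \<alpha>. hweight c = 2 * q^2 div 3} = (q^4 - q^3 + q^2 + q) div 2 - 1
    \<and> card {c \<in> trace_code m \<alpha>. hweight c = 2 * q * (q + 1) div 3} = (q^4 - q^3 - q^2 + q) div 3"
proof -
  have s: "q = 2 * card delta_squares + 1"
    using card_delta_squares q_ge_3 by simp
  have "\<forall>c\<in>trace_code m \<alpha>. length c = q\<^sup>2 - 1"
    by (auto simp: trace_code_eq length_codeword)
  then show ?thesis
    unfolding weight_values_arith[OF q_eq_3r r_pos] weight_counts_arith[OF q_eq_3r s]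
    using ternary_dim_trace_code min_dist_trace_code card_trace_code_weights by simp
qed

end

theorem corollary1:
  fixes m :: nat and \<alpha> :: "'a::{field,finite}"
  assumes "m \<ge> 1"
    and "card (UNIV :: 'a set) = (3 ^ m) ^ 2"
    and "primitive_elem \<alpha>"
  defines "q \<equiv> 3 ^ m"
  defines "C \<equiv> trace_code m \<alpha>"
  shows "(\<forall>c\<in>C. length c = q^2 - 1)
    \<and> ternary_dim C = 4 * m
    \<and> min_dist C = 2 * q * (q - 2) div 3
    \<and> card {c \<in> C. hweight c = 0} = 1
    \<and> card {c \<in> C. hweight c = 2 * q * (q - 2) div 3} = (q^4 - q^3 - q^2 + q) div 6
    \<and> card {c \<in> C. hweight c = 2 * q * (q - 1) div 3} = q^3 - q
    \<and> card {c \<in> C. hweight c = 2 * q^2 div 3} = (q^4 - q^3 + q^2 + q) div 2 - 1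
    \<and> card {c \<in> C. hweight c = 2 * q * (q + 1) div 3} = (q^4 - q^3 - q^2 + q) div 3"
proof -
  interpret trace_code_field m \<alpha>
    using assms(1-3) by unfold_locales
  show ?thesis
    unfolding q_def C_def by (rule trace_code_parameters)
qed

end
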